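(* For every positive integer $m$, $$\sum_{t=0}^{\lfloor m/6\rfloor}\binom{2m}{m+6t}=\frac12\left(\frac{2^{2m-1}+1}{3}+3^{m-1}+\binom{2m}{m}\right).$$ *)

theory Defs
  imports Complex_Main
begin

end

theory Submission
  imports Defs
begin

(* Roots-of-unity filter with the primitive sixth root zeta = e^(i pi/3): averaging
   zeta^(-jm) (1 + zeta^j)^(2m) over j < 6 keeps exactly the coefficients C(2m,k) with
   k = m (mod 6), and each term is (zeta^(-j) (1 + zeta^j)^2)^m = (2 + 2 cos (j pi/3))^m,
   so the average is (4^m + 2*3^m + 2)/6. The symmetry C(2m, m - 6t) = C(2m, m + 6t)
   folds the filtered sum onto the one-sided sum, the central coefficient counted twice. *)

lemma power_mod_of_power_eq_1:
  fixes z :: "'a::monoid_mult"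
  assumes "z ^ n = 1"
  shows "z ^ k = z ^ (k mod n)"
proof -
  have "z ^ k = z ^ (n * (k div n) + k mod n)"
    by (simp only: mult_div_mod_eq)
  also have "\<dots> = (z ^ n) ^ (k div n) * z ^ (k mod n)"
    by (simp only: power_add power_mult)
  finally show ?thesis
    using assms by simp
qed

lemma sum_powers_primitive_root:
  fixes z :: "'a::field"
  assumes "0 < n" and root: "z ^ n = 1"
    and primitive: "\<And>k. 0 < k \<Longrightarrow> k < n \<Longrightarrow> z ^ k \<noteq> 1"
  shows "(\<Sum>j<n. z ^ (j * d)) = (if n dvd d then of_nat n else 0)"
proof -
  define x where "x = z ^ (d mod n)"
  have powers: "z ^ (j * d) = x ^ j" for j
    using power_mod_of_power_eq_1[OF root, of d] by (simp add: x_def mult.commute power_mult)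
  show ?thesis
  proof (cases "n dvd d")
    case True
    then show ?thesis by (simp add: powers x_def)
  next
    case False
    with \<open>0 < n\<close> have "0 < d mod n" "d mod n < n"
      by (auto simp: mod_greater_zero_iff_not_dvd)
    then have "x \<noteq> 1"
      using primitive by (simp add: x_def)
    moreover have "x ^ n = (z ^ n) ^ (d mod n)"
      by (simp add: x_def mult.commute flip: power_mult)
    ultimately show ?thesis
      using False by (simp add: powers root sum_gp_strict)
  qed
qed

lemma binomial_roots_of_unity_filter:
  fixes z :: "'a::field"
  assumes "0 < n" and "z ^ n = 1"
    and "\<And>k. 0 < k \<Longrightarrow> k < n \<Longrightarrow> z ^ k \<noteq> 1"
  shows "(\<Sum>j<n. z ^ (j * r) * (1 + z ^ j) ^ N) =
         of_nat (n * (\<Sum>k\<le>N. if n dvd k + r then N choose k else 0))"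
proof -
  have "(\<Sum>j<n. z ^ (j * r) * (1 + z ^ j) ^ N) =
        (\<Sum>j<n. \<Sum>k\<le>N. of_nat (N choose k) * z ^ (j * (k + r)))"
  proof (rule sum.cong[OF refl])
    fix j
    have "(1 + z ^ j) ^ N = (\<Sum>k\<le>N. of_nat (N choose k) * z ^ (j * k))"
      using binomial_ring[of "z ^ j" 1 N] by (simp add: add.commute flip: power_mult)
    then show "z ^ (j * r) * (1 + z ^ j) ^ N = (\<Sum>k\<le>N. of_nat (N choose k) * z ^ (j * (k + r)))"
      by (simp add: sum_distrib_left algebra_simps power_add)
  qed
  also have "\<dots> = (\<Sum>k\<le>N. of_nat (N choose k) * (\<Sum>j<n. z ^ (j * (k + r))))"
    by (simp add: sum.swap[of _ "{..<n}"] sum_distrib_left)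
  also have "\<dots> = of_nat (n * (\<Sum>k\<le>N. if n dvd k + r then N choose k else 0))"
    by (simp add: sum_powers_primitive_root[OF assms] sum_distrib_left if_distrib mult.commute
        cong: if_cong)
  finally show ?thesis .
qed

definition zeta6 :: complex where
  "zeta6 = Complex (1/2) (sqrt 3 / 2)"

lemma zeta6_squared: "zeta6 ^ 2 = zeta6 - 1"
  by (simp add: zeta6_def power2_eq_square complex_eq_iff)

lemma zeta6_cubed: "zeta6 ^ 3 = -1"
proof -
  have "zeta6 ^ 3 = zeta6 * zeta6 ^ 2" by (simp add: power_numeral_reduce)
  also have "\<dots> = zeta6 * (zeta6 - 1)" by (simp only: zeta6_squared)
  also have "\<dots> = zeta6 ^ 2 - zeta6" by (simp add: algebra_simps power2_eq_square)
  finally show ?thesis by (simp add: zeta6_squared)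
qed

lemma zeta6_power_6: "zeta6 ^ 6 = 1"
  using zeta6_cubed power_mult[of zeta6 3 2] by simp

lemma zeta6_power: "zeta6 ^ k = [1, zeta6, zeta6 - 1, -1, -zeta6, 1 - zeta6] ! (k mod 6)"
proof -
  have "zeta6 ^ k = zeta6 ^ (k mod 6)"
    by (rule power_mod_of_power_eq_1[OF zeta6_power_6])
  moreover have "zeta6 ^ 4 = zeta6 * zeta6 ^ 3" "zeta6 ^ 5 = zeta6 ^ 2 * zeta6 ^ 3"
    by (simp_all flip: power_add power_Suc)
  then have "zeta6 ^ i = [1, zeta6, zeta6 - 1, -1, -zeta6, 1 - zeta6] ! i" if "i < 6" for i
    using that zeta6_squared zeta6_cubed
    by (cases "i = 0 \<or> i = 1 \<or> i = 2 \<or> i = 3 \<or> i = 4 \<or> i = 5") (auto simp: algebra_simps)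
  ultimately show ?thesis by simp
qed

lemma zeta6_primitive:
  assumes "0 < k" "k < 6"
  shows "zeta6 ^ k \<noteq> 1"
proof -
  have "k = 1 \<or> k = 2 \<or> k = 3 \<or> k = 4 \<or> k = 5"
    using assms by auto
  then have "zeta6 ^ k \<in> {zeta6, zeta6 - 1, -1, -zeta6, 1 - zeta6}"
    by (auto simp: zeta6_power[of k])
  then show ?thesis
    by (auto simp: zeta6_def complex_eq_iff)
qed

lemma sum_zeta6_binomial_weights:
  assumes "0 < m"
  shows "(\<Sum>j<6. zeta6 ^ (j * (5*m)) * (1 + zeta6 ^ j) ^ (2*m)) = of_nat (4^m + 2 * 3^m + 2)"
proof -
  have "zeta6 ^ (j * (5*m)) * (1 + zeta6 ^ j) ^ (2*m) = (zeta6 ^ j + 2 + zeta6 ^ (5*j)) ^ m" for j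
  proof -
    have "zeta6 ^ (j * (5*m)) * (1 + zeta6 ^ j) ^ (2*m) = (zeta6 ^ (5*j) * (1 + zeta6 ^ j) ^ 2) ^ m"
      unfolding power_mult_distrib power_mult[symmetric] by (simp add: ac_simps)
    also have "zeta6 ^ (5*j) * (1 + zeta6 ^ j) ^ 2 =
        zeta6 ^ (5*j) + 2 * zeta6 ^ (6*j) + zeta6 ^ (6*j) * zeta6 ^ j"
      by (simp add: power2_eq_square algebra_simps flip: power_add)
    also have "zeta6 ^ (6*j) = 1"
      by (simp add: zeta6_power[of "6*j"])
    finally show ?thesis
      by (simp add: ac_simps)
  qed
  then have "(\<Sum>j<6. zeta6 ^ (j * (5*m)) * (1 + zeta6 ^ j) ^ (2*m)) =
      (\<Sum>j<6. (zeta6 ^ j + 2 + zeta6 ^ (5*j)) ^ m)"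
    by simp
  also have "\<dots> = 4^m + 3^m + 1^m + 0^m + 1^m + 3^m"
  proof -
    have "(\<Sum>j<6. f j) = f 0 + f 1 + f 2 + f 3 + f 4 + f 5" for f :: "nat \<Rightarrow> complex"
      by (simp add: eval_nat_numeral)
    then show ?thesis
      by (simp add: zeta6_power)
  qed
  finally show ?thesis
    using assms by simp
qed

lemma congruent_to_middle_eq:
  fixes n m :: nat
  assumes "0 < n"
  shows "{k. k \<le> 2*m \<and> k mod n = m mod n} =
         (\<lambda>t. m + n*t) ` {0..m div n} \<union> (\<lambda>t. m - n*t) ` {1..m div n}"
proof -
  have bound: "t \<le> m div n \<longleftrightarrow> n*t \<le> m" for t
    using assms by (simp add: less_eq_div_iff_mult_less_eq mult.commute)
  show ?thesis
  proof (intro equalityI subsetI)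
    fix k
    assume "k \<in> {k. k \<le> 2*m \<and> k mod n = m mod n}"
    then have k: "k \<le> 2*m" "k mod n = m mod n" by auto
    show "k \<in> (\<lambda>t. m + n*t) ` {0..m div n} \<union> (\<lambda>t. m - n*t) ` {1..m div n}"
    proof (cases "m \<le> k")
      case True
      with k obtain t where t: "k = m + n*t"
        by (metis mod_eq_dvd_iff_nat dvdE le_add_diff_inverse)
      with k(1) bound have "t \<in> {0..m div n}" by simp
      with t show ?thesis by blast
    next
      case False
      with k obtain t where t: "m = k + n*t"
        by (metis mod_eq_dvd_iff_nat dvdE nat_le_linear le_add_diff_inverse)
      with False bound have "t \<in> {1..m div n}" "k = m - n*t" by auto
      then show ?thesis by blast
    qed
  next
    fix k
    assume "k \<in> (\<lambda>t. m + n*t) ` {0..m div n} \<union> (\<lambda>t. m - n*t) ` {1..m div n}"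
    then obtain t where "t \<le> m div n" and k: "k = m + n*t \<or> k = m - n*t"
      by auto
    with bound have "n*t \<le> m" by simp
    from k show "k \<in> {k. k \<le> 2*m \<and> k mod n = m mod n}"
    proof
      assume "k = m + n*t"
      with \<open>n*t \<le> m\<close> show ?thesis by simp
    next
      assume "k = m - n*t"
      with \<open>n*t \<le> m\<close> have "m = k + n*t" by simp
      then have "m mod n = k mod n" by simp
      with \<open>k = m - n*t\<close> show ?thesis by simp
    qed
  qed
qed

lemma sum_binomial_congruent_to_middle:
  fixes n m :: nat
  assumes "0 < n"
  shows "(\<Sum>k\<le>2*m. if k mod n = m mod n then 2*m choose k else 0) + (2*m choose m)
       = 2 * (\<Sum>t=0..m div n. 2*m choose (m + n*t))"
proof -
  let ?c = "\<lambda>k. 2*m choose k"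
  let ?above = "(\<lambda>t. m + n*t) ` {0..m div n}" and ?below = "(\<lambda>t. m - n*t) ` {1..m div n}"
  have bound: "n*t \<le> m" if "t \<le> m div n" for t
    using assms that by (simp add: less_eq_div_iff_mult_less_eq mult.commute)
  have "(\<Sum>k\<le>2*m. if k mod n = m mod n then ?c k else 0) = sum ?c (?above \<union> ?below)"
    unfolding congruent_to_middle_eq[OF assms, symmetric]
    by (simp add: sum.inter_filter[symmetric] atMost_def)
  also have "\<dots> = sum ?c ?above + sum ?c ?below"
  proof (rule sum.union_disjoint)
    have "m - n*t < m" if "t \<in> {1..m div n}" for t
    proof -
      from assms that have "0 < n*t" by auto
      moreover from bound that have "n*t \<le> m" by simp
      ultimately show ?thesis by arith
    qed
    then show "?above \<inter> ?below = {}" by fastforce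
  qed simp_all
  also have "sum ?c ?above = (\<Sum>t=0..m div n. ?c (m + n*t))"
    using assms by (simp add: sum.reindex inj_on_def)
  also have "sum ?c ?below = (\<Sum>t=1..m div n. ?c (m - n*t))"
  proof (rule sum.reindex_cong[OF _ refl refl])
    show "inj_on (\<lambda>t. m - n*t) {1..m div n}"
    proof (rule inj_onI)
      fix x y
      assume "x \<in> {1..m div n}" "y \<in> {1..m div n}" and eq: "m - n*x = m - n*y"
      then have "n*x \<le> m" "n*y \<le> m" using bound by simp_all
      with eq have "n*x = n*y" by arith
      with assms show "x = y" by simp
    qed
  qed
  also have "\<dots> = (\<Sum>t=1..m div n. ?c (m + n*t))"
  proof (rule sum.cong[OF refl])
    fix t assume "t \<in> {1..m div n}"
    then have "n*t \<le> m" using bound by simp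
    then show "?c (m - n*t) = ?c (m + n*t)"
      using binomial_symmetric[of "m - n*t" "2*m"] by simp
  qed
  finally have "(\<Sum>k\<le>2*m. if k mod n = m mod n then ?c k else 0) =
      (\<Sum>t=0..m div n. ?c (m + n*t)) + (\<Sum>t=1..m div n. ?c (m + n*t))" .
  moreover have "(\<Sum>t=0..m div n. ?c (m + n*t)) = ?c m + (\<Sum>t=1..m div n. ?c (m + n*t))"
    by (simp add: sum.atLeast_Suc_atMost)
  ultimately show ?thesis by linarith
qed

theorem lemma4:
  fixes m :: nat
  assumes "m \<ge> 1"
  shows "(\<Sum>t=0..m div 6. real ((2*m) choose (m + 6*t))) =
         (1/2) * ((2 ^ (2*m - 1) + 1) / 3 + 3 ^ (m - 1) + real ((2*m) choose m))"
proof -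
  \<comment> \<open>the exponent \<open>5*m\<close> stands for \<open>-m\<close> modulo 6\<close>
  define S where "S = (\<Sum>k\<le>2*m. if 6 dvd k + 5*m then 2*m choose k else 0)"
  have "of_nat (6 * S) = (of_nat (4^m + 2 * 3^m + 2) :: complex)"
    using binomial_roots_of_unity_filter[OF _ zeta6_power_6 zeta6_primitive, of "5*m" "2*m"]
      sum_zeta6_binomial_weights assms
    by (simp add: S_def)
  then have filtered: "6 * S = 4^m + 2 * 3^m + 2"
    by (simp only: of_nat_eq_iff)
  have "S = (\<Sum>k\<le>2*m. if k mod 6 = m mod 6 then 2*m choose k else 0)"
    unfolding S_def by (intro sum.cong refl if_cong) presburger+
  then have symmetric: "S + (2*m choose m) = 2 * (\<Sum>t=0..m div 6. 2*m choose (m + 6*t))"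
    using sum_binomial_congruent_to_middle[of 6 m] by simp
  have "(2::real) ^ (2*m - 1) * 2 = 4 ^ m"
    using assms by (simp add: power_mult flip: power_Suc2)
  moreover have "(3::real) ^ (m - 1) * 3 = 3 ^ m"
    using assms by (simp flip: power_Suc2)
  ultimately show ?thesis
    using arg_cong[OF filtered, of real] arg_cong[OF symmetric, of real]
    by (simp add: field_simps)
qed

end
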